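(* Let $\mathcal{I}$ be an instance of SNSAT with $|\mathcal{I}|=n$, and let $\mathcal{K}_\mathcal{I}$ and $\psi_0,\dots,\psi_{n+1}$ be the Kripke structure and formulas associated with $\mathcal{I}$ as described in the context. Then for all $0\le k\le n+1$ and all $r\in\{1,\dots,n\}$: (1) if $k\ge r$, then $v_\mathcal{I}(x_r)=\top$ iff $\mathcal{K}_\mathcal{I},w_{x_r}\models\psi_k$ (where $w_{x_r}$ denotes the track of length one consisting of that state); (2) if $k\ge r+1$, then $v_\mathcal{I}(x_r)=\bot$ iff $\mathcal{K}_\mathcal{I},\overline{w_{x_r}}\models\psi_k$.
   Context: SNSAT: an instance $\mathcal{I}$ consists of Boolean variables $X=\{x_1,\dots,x_n\}$ and propositional formulas $F_1(Z_1),F_2(x_1,Z_2),\dots,F_n(x_1,\dots,x_{n-1},Z_n)$, where $F_i$ uses variables among $x_1,\dots,x_{i-1}$ and $Z_i=\{z_i^1,\dots,z_i^{j_i}\}$, the sets $Z_i$ being pairwise disjoint and disjoint from $X$; $|\mathcal{I}|=n$. The valuation $v_\mathcal{I}$ of $X$ is defined by $v_\mathcal{I}(x_i)=\top$ iff $F_i(v_\mathcal{I}(x_1),\dots,v_\mathcal{I}(x_{i-1}),Z_i)$ is satisfiable. Kripke structures, tracks and semantics: a finite Kripke structure $(\mathcal{AP},W,\delta,\mu,w_0)$ has left-total $\delta\subseteq W\times W$ and labelling $\mu:W\to2^{\mathcal{AP}}$; a track is a nonempty finite sequence of states consecutive in $\delta$; $\mathrm{fst},\mathrm{lst}$ are its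 first/last state. Formulas use proposition letters, $\neg,\wedge$ (other connectives as abbreviations), $\top,\bot$, $\langle A\rangle$, $\langle B\rangle$, $[B]\psi=\neg\langle B\rangle\neg\psi$. $\rho\models p$ iff $p\in\mu(w)$ for all states $w$ of $\rho$; $\rho\models\langle A\rangle\psi$ iff some track $\rho'$ with $\mathrm{fst}(\rho')=\mathrm{lst}(\rho)$ satisfies $\psi$; $\rho\models\langle B\rangle\psi$ iff some proper prefix $\rho(1,i)$, $1\le i<|\rho|$, satisfies $\psi$. The $F_i$ are read as formulas over proposition letters $X\cup Z$. Construction: let $Z=\bigcup_iZ_i$, $R=\{r_1,\dots,r_n\}$, $R_i=R\setminus\{r_i\}$. $\mathcal{K}_\mathcal{I}$ has proposition letters $X\cup Z\cup\{s,t\}\cup R\cup\{p_{\overline{x_i}}:1\le i\le n\}$ and distinct states $s_0$ and, for each $i$, $w_{x_i},\overline{w_{x_i}},\overline{s_i}$, and $w_{z_i^u},\overline{w_{z_i^u}}$ for $1\le u\le j_i$. Labels: $\mu(w_{x_i})=X\cup Z\cup\{s,t\}\cup R_i$; $\mu(\overline{w_{x_i}})=(X\setminus\{x_i\})\cup Z\cup\{s,t\}\cup R_i\cup\{p_{\overline{x_i}}\}$; $\mu(w_{z_i^u})=X\cup Z\cup\{s,t\}\cup R_i$; $\mu(\overline{w_{z_i^u}})=X\cup(Z\setminus\{z_i^u\})\cup\{s,t\}\cup R_i$; $\mu(\overline{s_i})=X\cup Z\cup\{t\}\cup R_i$; $\mu(s_0)=X\cup Z\cup\{s\}\cup R$.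 Call $L_i^0=\{w_{x_i},\overline{w_{x_i}}\}$ and $L_i^u=\{w_{z_i^u},\overline{w_{z_i^u}}\}$ for $1\le u\le j_i$. Transitions: $\overline{w_{x_i}}\to\overline{s_i}\to w_{x_i}$; every state of $L_i^{u}$ has an edge to both states of $L_i^{u+1}$ for $0\le u<j_i$; every state of $L_i^{j_i}$ has an edge to both states of $L_{i-1}^0$ if $i\ge2$, and to $s_0$ if $i=1$; $s_0\to s_0$. The initial state is $w_{x_n}$. Formulas: $\ell_{=2}=\langle B\rangle\top\wedge[B][B]\bot$; $\psi_0=\bot$ and for $k\ge1$, $\psi_k=\langle A\rangle\varphi_k$ with $\varphi_k=(s\wedge\neg t)\wedge\bigwedge_{i=1}^n\big((x_i\wedge\neg r_i)\to F_i(x_1,\dots,x_{i-1},Z_i)\big)\wedge[B]\Big(\big(\bigvee_{i=1}^n\langle A\rangle p_{\overline{x_i}}\big)\to\langle A\rangle\big(\neg s\wedge\ell_{=2}\wedge\langle A\rangle(\ell_{=2}\wedge\neg\psi_{k-1})\big)\Big)$. *)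

theory Defs
  imports Main
begin

text \<open>Variables of an SNSAT instance: X m is x_m, Z i u is z_i^u.\<close>
datatype var = X nat | Z nat nat

datatype pform = PVar var | PNot pform | PAnd pform pform | POr pform pform | PTop | PBot

primrec peval :: "(var \<Rightarrow> bool) \<Rightarrow> pform \<Rightarrow> bool" where
  "peval \<sigma> (PVar v) = \<sigma> v"
| "peval \<sigma> (PNot f) = (\<not> peval \<sigma> f)"
| "peval \<sigma> (PAnd f g) = (peval \<sigma> f \<and> peval \<sigma> g)"
| "peval \<sigma> (POr f g) = (peval \<sigma> f \<or> peval \<sigma> g)"
| "peval \<sigma> PTop = True"
| "peval \<sigma> PBot = False"

primrec pvars :: "pform \<Rightarrow> var set" where
  "pvars (PVar v) = {v}"
| "pvars (PNot f) = pvars f"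
| "pvars (PAnd f g) = pvars f \<union> pvars g"
| "pvars (POr f g) = pvars f \<union> pvars g"
| "pvars PTop = {}"
| "pvars PBot = {}"

text \<open>An SNSAT instance of size n: the number j i of Z-variables of F_i and the
  formulas F i (1 \<le> i \<le> n).  Well-formedness: F_i uses only x_1..x_{i-1} and
  Z_i = {z_i^1,...,z_i^{j_i}}.\<close>
definition snsat_wf :: "nat \<Rightarrow> (nat \<Rightarrow> nat) \<Rightarrow> (nat \<Rightarrow> pform) \<Rightarrow> bool" where
  "snsat_wf n j F \<longleftrightarrow>
     (\<forall>i. 1 \<le> i \<and> i \<le> n \<longrightarrow>
        pvars (F i) \<subseteq> {X m | m. 1 \<le> m \<and> m < i} \<union> {Z i u | u. 1 \<le> u \<and> u \<le> j i})"

definition sat_with :: "pform \<Rightarrow> (nat \<Rightarrow> bool) \<Rightarrow> bool" where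
  "sat_with f val \<longleftrightarrow>
     (\<exists>\<zeta>. peval (\<lambda>v. case v of X m \<Rightarrow> val m | Z a b \<Rightarrow> \<zeta> a b) f)"

primrec snsat_vals :: "(nat \<Rightarrow> pform) \<Rightarrow> nat \<Rightarrow> nat \<Rightarrow> bool" where
  "snsat_vals F 0 = (\<lambda>_. False)"
| "snsat_vals F (Suc k) = (snsat_vals F k)(Suc k := sat_with (F (Suc k)) (snsat_vals F k))"

text \<open>v_I(x_i) = True iff F_i(v_I(x_1),...,v_I(x_{i-1}),Z_i) is satisfiable.\<close>
definition snsat_val :: "nat \<Rightarrow> (nat \<Rightarrow> pform) \<Rightarrow> nat \<Rightarrow> bool" where
  "snsat_val n F i = snsat_vals F n i"

record ('p, 's) kripke =
  kW :: "'s set"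
  kdelta :: "('s \<times> 's) set"
  kmu :: "'s \<Rightarrow> 'p set"
  kw0 :: "'s"

definition is_track :: "('p, 's) kripke \<Rightarrow> 's list \<Rightarrow> bool" where
  "is_track K \<rho> \<longleftrightarrow> \<rho> \<noteq> [] \<and> set \<rho> \<subseteq> kW K \<and>
     (\<forall>i. i + 1 < length \<rho> \<longrightarrow> (\<rho> ! i, \<rho> ! (i + 1)) \<in> kdelta K)"

datatype 'p hs = HProp 'p | HNeg "'p hs" | HAnd "'p hs" "'p hs" | HTop | HBot
  | HA "'p hs" | HB "'p hs"

primrec hs_sat :: "('p, 's) kripke \<Rightarrow> 's list \<Rightarrow> 'p hs \<Rightarrow> bool" where
  "hs_sat K \<rho> (HProp p) = (\<forall>w \<in> set \<rho>. p \<in> kmu K w)"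
| "hs_sat K \<rho> (HNeg \<psi>) = (\<not> hs_sat K \<rho> \<psi>)"
| "hs_sat K \<rho> (HAnd \<psi> \<chi>) = (hs_sat K \<rho> \<psi> \<and> hs_sat K \<rho> \<chi>)"
| "hs_sat K \<rho> HTop = True"
| "hs_sat K \<rho> HBot = False"
| "hs_sat K \<rho> (HA \<psi>) = (\<exists>\<rho>'. is_track K \<rho>' \<and> hd \<rho>' = last \<rho> \<and> hs_sat K \<rho>' \<psi>)"
| "hs_sat K \<rho> (HB \<psi>) = (\<exists>i. 1 \<le> i \<and> i < length \<rho> \<and> hs_sat K (take i \<rho>) \<psi>)"

definition HOr :: "'p hs \<Rightarrow> 'p hs \<Rightarrow> 'p hs" where
  "HOr a b = HNeg (HAnd (HNeg a) (HNeg b))"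
definition HImp :: "'p hs \<Rightarrow> 'p hs \<Rightarrow> 'p hs" where
  "HImp a b = HNeg (HAnd a (HNeg b))"
definition HBoxB :: "'p hs \<Rightarrow> 'p hs" where
  "HBoxB a = HNeg (HB (HNeg a))"
definition HBigAnd :: "'p hs list \<Rightarrow> 'p hs" where
  "HBigAnd xs = foldr HAnd xs HTop"
definition HBigOr :: "'p hs list \<Rightarrow> 'p hs" where
  "HBigOr xs = foldr HOr xs HBot"

text \<open>Proposition letters: x_i, z_i^u, s, t, r_i, p_{bar x_i}.\<close>
datatype aprop = PX nat | PZ nat nat | Ps | Pt | PR nat | PXbar nat

text \<open>States: s_0, w_{x_i}, bar w_{x_i}, bar s_i, w_{z_i^u}, bar w_{z_i^u}.\<close>
datatype state = S0 | Wx nat | Wxbar nat | Sbar nat | Wz nat nat | Wzbar nat nat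

definition apX :: "nat \<Rightarrow> aprop set" where "apX n = {PX i | i. 1 \<le> i \<and> i \<le> n}"
definition apZ :: "nat \<Rightarrow> (nat \<Rightarrow> nat) \<Rightarrow> aprop set" where
  "apZ n j = {PZ i u | i u. 1 \<le> i \<and> i \<le> n \<and> 1 \<le> u \<and> u \<le> j i}"
definition apR :: "nat \<Rightarrow> aprop set" where "apR n = {PR i | i. 1 \<le> i \<and> i \<le> n}"
definition apRi :: "nat \<Rightarrow> nat \<Rightarrow> aprop set" where "apRi n i = apR n - {PR i}"

definition KI_W :: "nat \<Rightarrow> (nat \<Rightarrow> nat) \<Rightarrow> state set" where
  "KI_W n j = {S0} \<union> {Wx i | i. 1 \<le> i \<and> i \<le> n} \<union> {Wxbar i | i. 1 \<le> i \<and> i \<le> n}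
     \<union> {Sbar i | i. 1 \<le> i \<and> i \<le> n}
     \<union> {Wz i u | i u. 1 \<le> i \<and> i \<le> n \<and> 1 \<le> u \<and> u \<le> j i}
     \<union> {Wzbar i u | i u. 1 \<le> i \<and> i \<le> n \<and> 1 \<le> u \<and> u \<le> j i}"

fun KI_mu :: "nat \<Rightarrow> (nat \<Rightarrow> nat) \<Rightarrow> state \<Rightarrow> aprop set" where
  "KI_mu n j (Wx i) = apX n \<union> apZ n j \<union> {Ps, Pt} \<union> apRi n i"
| "KI_mu n j (Wxbar i) = (apX n - {PX i}) \<union> apZ n j \<union> {Ps, Pt} \<union> apRi n i \<union> {PXbar i}"
| "KI_mu n j (Wz i u) = apX n \<union> apZ n j \<union> {Ps, Pt} \<union> apRi n i"
| "KI_mu n j (Wzbar i u) = apX n \<union> (apZ n j - {PZ i u}) \<union> {Ps, Pt} \<union> apRi n i"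
| "KI_mu n j (Sbar i) = apX n \<union> apZ n j \<union> {Pt} \<union> apRi n i"
| "KI_mu n j S0 = apX n \<union> apZ n j \<union> {Ps} \<union> apR n"

definition layer :: "nat \<Rightarrow> nat \<Rightarrow> state set" where
  "layer i u = (if u = 0 then {Wx i, Wxbar i} else {Wz i u, Wzbar i u})"

definition KI_delta :: "nat \<Rightarrow> (nat \<Rightarrow> nat) \<Rightarrow> (state \<times> state) set" where
  "KI_delta n j =
     {(Wxbar i, Sbar i) | i. 1 \<le> i \<and> i \<le> n}
   \<union> {(Sbar i, Wx i) | i. 1 \<le> i \<and> i \<le> n}
   \<union> {(a, b) | a b i u. 1 \<le> i \<and> i \<le> n \<and> u < j i \<and> a \<in> layer i u \<and> b \<in> layer i (Suc u)}
   \<union> {(a, b) | a b i. 2 \<le> i \<and> i \<le> n \<and> a \<in> layer i (j i) \<and> b \<in> layer (i - 1) 0}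
   \<union> {(a, S0) | a. 1 \<le> n \<and> a \<in> layer 1 (j 1)}
   \<union> {(S0, S0)}"

definition KI :: "nat \<Rightarrow> (nat \<Rightarrow> nat) \<Rightarrow> (aprop, state) kripke" where
  "KI n j = \<lparr> kW = KI_W n j, kdelta = KI_delta n j, kmu = KI_mu n j, kw0 = Wx n \<rparr>"

primrec ptrans :: "pform \<Rightarrow> aprop hs" where
  "ptrans (PVar v) = (case v of X m \<Rightarrow> HProp (PX m) | Z a b \<Rightarrow> HProp (PZ a b))"
| "ptrans (PNot f) = HNeg (ptrans f)"
| "ptrans (PAnd f g) = HAnd (ptrans f) (ptrans g)"
| "ptrans (POr f g) = HOr (ptrans f) (ptrans g)"
| "ptrans PTop = HTop"
| "ptrans PBot = HBot"

definition len2 :: "aprop hs" where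
  "len2 = HAnd (HB HTop) (HBoxB (HBoxB HBot))"

definition phi_body :: "nat \<Rightarrow> (nat \<Rightarrow> pform) \<Rightarrow> aprop hs \<Rightarrow> aprop hs" where
  "phi_body n F prev =
     HAnd (HAnd (HProp Ps) (HNeg (HProp Pt)))
      (HAnd (HBigAnd (map (\<lambda>i. HImp (HAnd (HProp (PX i)) (HNeg (HProp (PR i)))) (ptrans (F i)))
                          [1..<n+1]))
            (HBoxB (HImp (HBigOr (map (\<lambda>i. HA (HProp (PXbar i))) [1..<n+1]))
                         (HA (HAnd (HNeg (HProp Ps)) (HAnd len2 (HA (HAnd len2 (HNeg prev)))))))))"

primrec psi :: "nat \<Rightarrow> (nat \<Rightarrow> pform) \<Rightarrow> nat \<Rightarrow> aprop hs" where
  "psi n F 0 = HBot"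
| "psi n F (Suc k) = HA (phi_body n F (psi n F k))"

end

theory Submission
  imports Defs
begin

text \<open>
  \<open>psi (Suc k)\<close> holds at \<open>[w]\<close> iff some track starting at w satisfies \<open>phi_body\<close>.
  Such a track avoids every \<open>Sbar i\<close> and reaches \<open>S0\<close>, so it descends through all blocks
  below its start, picking one state per layer; it thereby guesses a valuation
  (a variable is false iff its barred state is visited), and each \<open>F i\<close> of a visited block
  whose \<open>x i\<close> is guessed true must hold under it.  The \<open>[B]\<close>-conjunct admits guessing \<open>x i\<close>
  false only if \<open>psi k\<close> fails at \<open>Wx i\<close>, which it inspects through the forced detour
  \<open>Wxbar i \<rightarrow> Sbar i \<rightarrow> Wx i\<close>.  By induction on k, \<open>psi k\<close> decides \<open>x i\<close> correctly for
  \<open>i \<le> k\<close>; hence for \<open>r \<le> k + 1\<close> the guesses below r are forced to agree with the SNSAT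
  valuation, a track from \<open>Wx r\<close> exists iff \<open>F r\<close> is satisfiable under it, and a track from
  \<open>Wxbar r\<close> exists iff \<open>psi k\<close> fails at \<open>Wx r\<close>.
\<close>

lemma is_track_iff_successively:
  "is_track K \<rho> \<longleftrightarrow> \<rho> \<noteq> [] \<and> set \<rho> \<subseteq> kW K \<and> successively (\<lambda>a b. (a, b) \<in> kdelta K) \<rho>"
  unfolding is_track_def successively_conv_nth by auto

lemma is_track_pair: "is_track K [a, b] \<longleftrightarrow> a \<in> kW K \<and> b \<in> kW K \<and> (a, b) \<in> kdelta K"
  by (auto simp: is_track_iff_successively)

lemma last_take_Suc: "Suc q \<le> length xs \<Longrightarrow> last (take (Suc q) xs) = xs ! q"
  by (simp add: take_Suc_conv_app_nth)

lemma successively_upt: "(\<And>u. a \<le> u \<Longrightarrow> Suc u < b \<Longrightarrow> P u (Suc u)) \<Longrightarrow> successively P [a..<b]"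
  by (auto simp: successively_conv_nth)

lemma hs_sat_HImp: "hs_sat K \<rho> (HImp \<phi> \<psi>) \<longleftrightarrow> (hs_sat K \<rho> \<phi> \<longrightarrow> hs_sat K \<rho> \<psi>)"
  by (auto simp: HImp_def)

lemma hs_sat_HBoxB:
  "hs_sat K \<rho> (HBoxB \<psi>) \<longleftrightarrow> (\<forall>i. 1 \<le> i \<and> i < length \<rho> \<longrightarrow> hs_sat K (take i \<rho>) \<psi>)"
  by (auto simp: HBoxB_def)

lemma hs_sat_HBigAnd: "hs_sat K \<rho> (HBigAnd \<psi>s) \<longleftrightarrow> (\<forall>\<psi>\<in>set \<psi>s. hs_sat K \<rho> \<psi>)"
  by (induction \<psi>s) (auto simp: HBigAnd_def)

lemma hs_sat_HBigOr: "hs_sat K \<rho> (HBigOr \<psi>s) \<longleftrightarrow> (\<exists>\<psi>\<in>set \<psi>s. hs_sat K \<rho> \<psi>)"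
  by (induction \<psi>s) (auto simp: HBigOr_def HOr_def)

lemma hs_sat_len2: "hs_sat K \<rho> len2 \<longleftrightarrow> length \<rho> = 2"
proof -
  have "hs_sat K \<rho> (HBoxB (HBoxB HBot)) \<longleftrightarrow> length \<rho> \<le> 2"
  proof
    assume "hs_sat K \<rho> (HBoxB (HBoxB HBot))"
    then have "\<not> hs_sat K (take 2 \<rho>) (HB HTop)" if "2 < length \<rho>"
      using that by (auto simp: hs_sat_HBoxB)
    then show "length \<rho> \<le> 2" by (force intro: exI[of _ 1])
  qed (auto simp: hs_sat_HBoxB)
  then show ?thesis
    by (auto simp: len2_def intro: exI[of _ 1])
qed

lemma hs_sat_ptrans:
  "hs_sat K \<rho> (ptrans f) \<longleftrightarrow>
     peval (\<lambda>v. hs_sat K \<rho> (HProp (case v of X m \<Rightarrow> PX m | Z a b \<Rightarrow> PZ a b))) f"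
  by (induction f) (auto simp: HOr_def split: var.splits)

lemma hs_sat_psi_last: "hs_sat K \<rho> (psi n F k) \<longleftrightarrow> hs_sat K [last \<rho>] (psi n F k)"
  by (cases k) simp_all

section \<open>The SNSAT valuation\<close>

lemma peval_cong: "(\<And>v. v \<in> pvars f \<Longrightarrow> \<sigma> v = \<sigma>' v) \<Longrightarrow> peval \<sigma> f = peval \<sigma>' f"
  by (induction f) auto

lemma peval_F_cong:
  assumes "snsat_wf n j F" and "1 \<le> i" "i \<le> n"
    and "\<And>m. 1 \<le> m \<Longrightarrow> m < i \<Longrightarrow> \<sigma> (X m) = \<sigma>' (X m)"
    and "\<And>u. 1 \<le> u \<Longrightarrow> u \<le> j i \<Longrightarrow> \<sigma> (Z i u) = \<sigma>' (Z i u)"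
  shows "peval \<sigma> (F i) = peval \<sigma>' (F i)"
proof (rule peval_cong)
  fix v assume "v \<in> pvars (F i)"
  with assms(1-3) have "v \<in> {X m |m. 1 \<le> m \<and> m < i} \<union> {Z i u |u. 1 \<le> u \<and> u \<le> j i}"
    unfolding snsat_wf_def by blast
  with assms(4,5) show "\<sigma> v = \<sigma>' v" by blast
qed

lemma snsat_vals_stable: "m \<le> k \<Longrightarrow> snsat_vals F k m = snsat_vals F m m"
  by (induction k) (auto simp: le_Suc_eq)

lemma snsat_val_iff_sat_with:
  assumes wf: "snsat_wf n j F" and i: "1 \<le> i" "i \<le> n"
    and agree: "\<And>m. 1 \<le> m \<Longrightarrow> m < i \<Longrightarrow> val m = snsat_val n F m"
  shows "snsat_val n F i \<longleftrightarrow> sat_with (F i) val"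
proof -
  obtain i' where i': "i = Suc i'" using i by (cases i) auto
  have "snsat_val n F i \<longleftrightarrow> sat_with (F i) (snsat_vals F i')"
    using snsat_vals_stable[of i n F] i i' by (simp add: snsat_val_def)
  also have "\<dots> \<longleftrightarrow> sat_with (F i) val"
    unfolding sat_with_def
  proof (intro ex_cong1 peval_F_cong[OF wf i])
    fix m assume "1 \<le> m" "m < i"
    then show "(case X m of X m \<Rightarrow> snsat_vals F i' m | Z a b \<Rightarrow> \<zeta> a b) =
               (case X m of X m \<Rightarrow> val m | Z a b \<Rightarrow> \<zeta> a b)" for \<zeta>
      using agree snsat_vals_stable[of m i' F] snsat_vals_stable[of m n F] i i'
      by (simp add: snsat_val_def)
  qed simp
  finally show ?thesis .
qed

lemma snsat_Z_witness:
  assumes wf: "snsat_wf n j F"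
  obtains \<zeta> where "\<And>i. 1 \<le> i \<Longrightarrow> i \<le> n \<Longrightarrow> snsat_val n F i \<Longrightarrow>
    peval (\<lambda>v. case v of X m \<Rightarrow> snsat_val n F m | Z a b \<Rightarrow> \<zeta> a b) (F i)"
proof -
  have "\<forall>i. \<exists>\<zeta>. 1 \<le> i \<and> i \<le> n \<and> snsat_val n F i \<longrightarrow>
    peval (\<lambda>v. case v of X m \<Rightarrow> snsat_val n F m | Z a b \<Rightarrow> \<zeta> a b) (F i)"
    using snsat_val_iff_sat_with[OF wf] by (auto simp: sat_with_def)
  then obtain \<zeta>s where \<zeta>s: "\<And>i. 1 \<le> i \<Longrightarrow> i \<le> n \<Longrightarrow> snsat_val n F i \<Longrightarrow>
    peval (\<lambda>v. case v of X m \<Rightarrow> snsat_val n F m | Z a b \<Rightarrow> \<zeta>s i a b) (F i)"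
    by metis
  \<comment> \<open>\<open>F i\<close> mentions only Z-variables of block i, so the per-block witnesses combine.\<close>
  show thesis
  proof (rule that)
    fix i assume i: "1 \<le> i" "i \<le> n" "snsat_val n F i"
    have "peval (\<lambda>v. case v of X m \<Rightarrow> snsat_val n F m | Z a b \<Rightarrow> \<zeta>s i a b) (F i) =
          peval (\<lambda>v. case v of X m \<Rightarrow> snsat_val n F m | Z a b \<Rightarrow> \<zeta>s a a b) (F i)"
      by (rule peval_F_cong[OF wf i(1,2)]) simp_all
    with \<zeta>s[OF i] show "peval (\<lambda>v. case v of X m \<Rightarrow> snsat_val n F m | Z a b \<Rightarrow> \<zeta>s a a b) (F i)"
      by simp
  qed
qed

fun state_block :: "state \<Rightarrow> nat" where
  "state_block S0 = 0"
| "state_block (Wx i) = i"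
| "state_block (Wxbar i) = i"
| "state_block (Sbar i) = i"
| "state_block (Wz i u) = i"
| "state_block (Wzbar i u) = i"

fun state_layer :: "state \<Rightarrow> nat" where
  "state_layer (Wz i u) = u"
| "state_layer (Wzbar i u) = u"
| "state_layer _ = 0"

lemma KI_simps [simp]:
  "kW (KI n j) = KI_W n j" "kdelta (KI n j) = KI_delta n j" "kmu (KI n j) = KI_mu n j"
  by (simp_all add: KI_def)

lemma Ps_in_KI_mu: "Ps \<in> KI_mu n j w \<longleftrightarrow> (\<forall>i. w \<noteq> Sbar i)"
  by (cases w) (auto simp: apX_def apZ_def apRi_def apR_def)

lemma Pt_in_KI_mu: "Pt \<in> KI_mu n j w \<longleftrightarrow> w \<noteq> S0"
  by (cases w) (auto simp: apX_def apZ_def apRi_def apR_def)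

lemma PX_in_KI_mu: "1 \<le> i \<Longrightarrow> i \<le> n \<Longrightarrow> PX i \<in> KI_mu n j w \<longleftrightarrow> w \<noteq> Wxbar i"
  by (cases w) (auto simp: apX_def apZ_def apRi_def apR_def)

lemma PZ_in_KI_mu:
  "1 \<le> i \<Longrightarrow> i \<le> n \<Longrightarrow> 1 \<le> u \<Longrightarrow> u \<le> j i \<Longrightarrow> PZ i u \<in> KI_mu n j w \<longleftrightarrow> w \<noteq> Wzbar i u"
  by (cases w) (auto simp: apX_def apZ_def apRi_def apR_def)

lemma PR_in_KI_mu: "1 \<le> i \<Longrightarrow> i \<le> n \<Longrightarrow> PR i \<in> KI_mu n j w \<longleftrightarrow> state_block w \<noteq> i"
  by (cases w) (auto simp: apX_def apZ_def apRi_def apR_def)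

lemma PXbar_in_KI_mu: "PXbar i \<in> KI_mu n j w \<longleftrightarrow> w = Wxbar i"
  by (cases w) (auto simp: apX_def apZ_def apRi_def apR_def)

lemma KI_delta_block_le: "(a, b) \<in> KI_delta n j \<Longrightarrow> state_block a \<le> Suc (state_block b)"
  by (auto simp: KI_delta_def layer_def split: if_splits)

lemma KI_delta_descends:
  "(a, b) \<in> KI_delta n j \<Longrightarrow> \<forall>i. a \<noteq> Sbar i \<Longrightarrow> \<forall>i. b \<noteq> Sbar i \<Longrightarrow> b \<noteq> S0 \<Longrightarrow>
   state_block b < state_block a \<or>
   state_block b = state_block a \<and> state_layer a < state_layer b"
  by (auto simp: KI_delta_def layer_def split: if_splits)

lemma KI_delta_from_S0: "(S0, b) \<in> KI_delta n j \<Longrightarrow> b = S0"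
  by (auto simp: KI_delta_def layer_def split: if_splits)

lemma KI_delta_into_Sbar: "(a, Sbar i) \<in> KI_delta n j \<Longrightarrow> a = Wxbar i"
  by (auto simp: KI_delta_def layer_def split: if_splits)

lemma KI_delta_from_Sbar: "(Sbar i, b) \<in> KI_delta n j \<Longrightarrow> b = Wx i"
  by (auto simp: KI_delta_def layer_def split: if_splits)

lemma KI_delta_within_block:
  "1 \<le> i \<Longrightarrow> i \<le> n \<Longrightarrow> u < j i \<Longrightarrow> a \<in> layer i u \<Longrightarrow> b \<in> layer i (Suc u) \<Longrightarrow>
   (a, b) \<in> KI_delta n j"
  unfolding KI_delta_def by blast

lemma KI_delta_next_block:
  "2 \<le> i \<Longrightarrow> i \<le> n \<Longrightarrow> a \<in> layer i (j i) \<Longrightarrow> b \<in> layer (i - 1) 0 \<Longrightarrow>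
   (a, b) \<in> KI_delta n j"
  unfolding KI_delta_def by blast

lemma KI_delta_to_S0: "1 \<le> n \<Longrightarrow> a \<in> layer 1 (j 1) \<Longrightarrow> (a, S0) \<in> KI_delta n j"
  unfolding KI_delta_def by blast

lemma is_track_detour:
  "1 \<le> i \<Longrightarrow> i \<le> n \<Longrightarrow>
   is_track (KI n j) [Wxbar i, Sbar i] \<and> is_track (KI n j) [Sbar i, Wx i]"
  by (auto simp: is_track_pair KI_W_def KI_delta_def)

section \<open>Tracks of \<open>K\<^sub>I\<close>\<close>

lemma KI_track_S0_absorbing:
  assumes sc: "successively (\<lambda>a b. (a, b) \<in> KI_delta n j) \<rho>"
    and "\<rho> ! q = S0" "q \<le> p" "p < length \<rho>"
  shows "\<rho> ! p = S0"
  using assms(3,4)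
proof (induction p)
  case (Suc p)
  show ?case
  proof (cases "q = Suc p")
    case False
    with Suc have "\<rho> ! p = S0" by simp
    moreover have "(\<rho> ! p, \<rho> ! Suc p) \<in> KI_delta n j"
      using successively_nth[OF sc] Suc.prems by simp
    ultimately show ?thesis by (metis KI_delta_from_S0)
  qed (use assms(2) in simp)
qed (use assms(2) in simp)

lemma KI_track_continues_until_S0:
  assumes sc: "successively (\<lambda>a b. (a, b) \<in> KI_delta n j) \<rho>"
    and "S0 \<in> set \<rho>" "q < length \<rho>" "\<rho> ! q \<noteq> S0"
  shows "Suc q < length \<rho>"
proof (rule ccontr)
  obtain q0 where q0: "q0 < length \<rho>" "\<rho> ! q0 = S0"
    using assms(2) by (auto simp: in_set_conv_nth)
  assume "\<not> Suc q < length \<rho>"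
  with q0 assms(3) have "q0 \<le> q" by linarith
  then show False using KI_track_S0_absorbing[OF sc q0(2)] assms(3,4) by blast
qed

lemma nat_intermed_val_descending:
  fixes f :: "nat \<Rightarrow> nat"
  assumes "\<forall>p<q. f p \<le> Suc (f (Suc p))" "f q \<le> i" "i \<le> f 0"
  shows "\<exists>p\<le>q. f p = i"
  using assms
proof (induction q)
  case (Suc q)
  show ?case
  proof (cases "f q \<le> i")
    case True
    with Suc obtain p where "p \<le> q" "f p = i" by auto
    then show ?thesis using le_SucI by blast
  next
    case False
    have "f q \<le> Suc (f (Suc q))" using Suc.prems(1) by simp
    with False Suc.prems(2) have "f (Suc q) = i" by linarith
    then show ?thesis by blast
  qed
qed auto

lemma KI_track_visits_blocks:
  assumes sc: "successively (\<lambda>a b. (a, b) \<in> KI_delta n j) \<rho>"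
    and "S0 \<in> set \<rho>" "i \<le> state_block (\<rho> ! 0)"
  shows "\<exists>w\<in>set \<rho>. state_block w = i"
proof -
  obtain q0 where q0: "q0 < length \<rho>" "\<rho> ! q0 = S0"
    using assms(2) by (auto simp: in_set_conv_nth)
  have "state_block (\<rho> ! p) \<le> Suc (state_block (\<rho> ! Suc p))" if "p < q0" for p
  proof -
    from that q0(1) have "Suc p < length \<rho>" by linarith
    then show ?thesis using successively_nth[OF sc] KI_delta_block_le by blast
  qed
  then obtain p where "p \<le> q0" "state_block (\<rho> ! p) = i"
    using nat_intermed_val_descending[of q0 "\<lambda>p. state_block (\<rho> ! p)" i] q0(2) assms(3) by auto
  with q0(1) show ?thesis by (metis le_less_trans nth_mem)
qed

lemma KI_track_descends:
  assumes sc: "successively (\<lambda>a b. (a, b) \<in> KI_delta n j) \<rho>"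
    and no_Sbar: "\<forall>w\<in>set \<rho>. \<forall>i. w \<noteq> Sbar i"
    and "0 < q" "q < length \<rho>" "\<rho> ! q \<noteq> S0"
  shows "state_block (\<rho> ! q) < state_block (\<rho> ! 0) \<or>
    state_block (\<rho> ! q) = state_block (\<rho> ! 0) \<and> state_layer (\<rho> ! 0) < state_layer (\<rho> ! q)"
  using assms(3-5)
proof (induction q)
  case (Suc q)
  have edge: "(\<rho> ! q, \<rho> ! Suc q) \<in> KI_delta n j"
    using successively_nth[OF sc] Suc.prems by simp
  then have "\<rho> ! q \<noteq> S0" using Suc.prems(3) KI_delta_from_S0 by metis
  moreover have "\<forall>i. \<rho> ! q \<noteq> Sbar i" "\<forall>i. \<rho> ! Suc q \<noteq> Sbar i"
    using no_Sbar Suc.prems(2) by auto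
  ultimately have step: "state_block (\<rho> ! Suc q) < state_block (\<rho> ! q) \<or>
    state_block (\<rho> ! Suc q) = state_block (\<rho> ! q) \<and> state_layer (\<rho> ! q) < state_layer (\<rho> ! Suc q)"
    using KI_delta_descends[OF edge] Suc.prems(3) by blast
  show ?case
  proof (cases q)
    case 0
    with step show ?thesis by simp
  next
    case (Suc q')
    with Suc.IH Suc.prems \<open>\<rho> ! q \<noteq> S0\<close> have
      "state_block (\<rho> ! q) < state_block (\<rho> ! 0) \<or>
       state_block (\<rho> ! q) = state_block (\<rho> ! 0) \<and> state_layer (\<rho> ! 0) < state_layer (\<rho> ! q)"
      by simp
    with step show ?thesis by auto
  qed
qed simp

lemma KI_track_from_Wx_avoids_Wxbar:
  assumes sc: "successively (\<lambda>a b. (a, b) \<in> KI_delta n j) \<rho>"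
    and no_Sbar: "\<forall>w\<in>set \<rho>. \<forall>i. w \<noteq> Sbar i" and "\<rho> ! 0 = Wx r"
  shows "Wxbar r \<notin> set \<rho>"
proof
  assume "Wxbar r \<in> set \<rho>"
  then obtain q where q: "q < length \<rho>" "\<rho> ! q = Wxbar r" by (auto simp: in_set_conv_nth)
  moreover have "0 < q" using q assms(3) by (cases q) auto
  ultimately show False using KI_track_descends[OF sc no_Sbar, of q] assms(3) by simp
qed

definition track_val :: "state list \<Rightarrow> var \<Rightarrow> bool" where
  "track_val \<rho> = (\<lambda>v. case v of X m \<Rightarrow> Wxbar m \<notin> set \<rho> | Z a b \<Rightarrow> Wzbar a b \<notin> set \<rho>)"

lemma sat_with_track_val: "peval (track_val \<rho>) f \<Longrightarrow> sat_with f (\<lambda>m. Wxbar m \<notin> set \<rho>)"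
  unfolding sat_with_def track_val_def by blast

lemma hs_sat_ptrans_F:
  assumes "snsat_wf n j F" "1 \<le> i" "i \<le> n"
  shows "hs_sat (KI n j) \<rho> (ptrans (F i)) \<longleftrightarrow> peval (track_val \<rho>) (F i)"
  unfolding hs_sat_ptrans
  by (rule peval_F_cong[OF assms]) (use assms(2,3) in \<open>auto simp: track_val_def PX_in_KI_mu PZ_in_KI_mu\<close>)

lemma hs_sat_some_PXbar:
  "hs_sat (KI n j) \<rho> (HBigOr (map (\<lambda>i. HA (HProp (PXbar i))) [1..<n+1])) \<longleftrightarrow>
   (\<exists>i. 1 \<le> i \<and> i \<le> n \<and> last \<rho> = Wxbar i)"
proof
  assume "hs_sat (KI n j) \<rho> (HBigOr (map (\<lambda>i. HA (HProp (PXbar i))) [1..<n+1]))"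
  then obtain i \<rho>' where "1 \<le> i" "i \<le> n" "is_track (KI n j) \<rho>'" "hd \<rho>' = last \<rho>"
    and "\<forall>w\<in>set \<rho>'. PXbar i \<in> KI_mu n j w"
    by (auto simp: hs_sat_HBigOr)
  moreover from \<open>is_track (KI n j) \<rho>'\<close> have "hd \<rho>' \<in> set \<rho>'" by (simp add: is_track_def)
  ultimately show "\<exists>i. 1 \<le> i \<and> i \<le> n \<and> last \<rho> = Wxbar i"
    by (auto simp: PXbar_in_KI_mu)
next
  assume "\<exists>i. 1 \<le> i \<and> i \<le> n \<and> last \<rho> = Wxbar i"
  then obtain i where i: "1 \<le> i" "i \<le> n" "last \<rho> = Wxbar i" by blast
  then have "is_track (KI n j) [Wxbar i]" by (auto simp: is_track_def KI_W_def)
  with i show "hs_sat (KI n j) \<rho> (HBigOr (map (\<lambda>i. HA (HProp (PXbar i))) [1..<n+1]))"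
    by (auto simp: hs_sat_HBigOr PXbar_in_KI_mu intro!: bexI[of _ i] exI[of _ "[Wxbar i]"])
qed

lemma hs_sat_detour_iff:
  assumes i: "1 \<le> i" "i \<le> n" and last: "last \<rho> = Wxbar i"
  shows "hs_sat (KI n j) \<rho> (HA (HAnd (HNeg (HProp Ps)) (HAnd len2 (HA (HAnd len2 (HNeg \<psi>))))))
    \<longleftrightarrow> \<not> hs_sat (KI n j) [Sbar i, Wx i] \<psi>"
proof
  assume "hs_sat (KI n j) \<rho> (HA (HAnd (HNeg (HProp Ps)) (HAnd len2 (HA (HAnd len2 (HNeg \<psi>))))))"
  then obtain \<rho>1 \<rho>2 where \<rho>1: "is_track (KI n j) \<rho>1" "hd \<rho>1 = Wxbar i" "length \<rho>1 = 2"
      "\<exists>w\<in>set \<rho>1. Ps \<notin> KI_mu n j w"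
    and \<rho>2: "is_track (KI n j) \<rho>2" "hd \<rho>2 = last \<rho>1" "length \<rho>2 = 2" "\<not> hs_sat (KI n j) \<rho>2 \<psi>"
    using last by (auto simp: hs_sat_len2)
  obtain b where "\<rho>1 = [Wxbar i, b]"
    using \<rho>1(2,3) by (auto simp: numeral_2_eq_2 length_Suc_conv)
  with \<rho>1 have "\<rho>1 = [Wxbar i, Sbar i]"
    by (auto simp: Ps_in_KI_mu is_track_pair dest: KI_delta_into_Sbar)
  moreover obtain d where "\<rho>2 = [Sbar i, d]"
    using \<rho>2(2,3) calculation by (auto simp: numeral_2_eq_2 length_Suc_conv)
  ultimately show "\<not> hs_sat (KI n j) [Sbar i, Wx i] \<psi>"
    using \<rho>2(1,4) by (auto simp: is_track_pair dest: KI_delta_from_Sbar)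
next
  assume "\<not> hs_sat (KI n j) [Sbar i, Wx i] \<psi>"
  then show "hs_sat (KI n j) \<rho> (HA (HAnd (HNeg (HProp Ps)) (HAnd len2 (HA (HAnd len2 (HNeg \<psi>))))))"
    unfolding hs_sat.simps hs_sat_len2
    using is_track_detour[OF i, of j] last
    by (intro exI[of _ "[Wxbar i, Sbar i]"] conjI exI[of _ "[Sbar i, Wx i]"]) (auto simp: Ps_in_KI_mu)
qed

lemma hs_sat_phi_body_iff:
  assumes wf: "snsat_wf n j F"
  shows "hs_sat (KI n j) \<rho> (phi_body n F (psi n F k)) \<longleftrightarrow>
    (\<forall>w\<in>set \<rho>. \<forall>i. w \<noteq> Sbar i) \<and> S0 \<in> set \<rho> \<and>
    (\<forall>i. 1 \<le> i \<and> i \<le> n \<and> Wxbar i \<notin> set \<rho> \<and> (\<exists>w\<in>set \<rho>. state_block w = i) \<longrightarrow>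
      peval (track_val \<rho>) (F i)) \<and>
    (\<forall>q i. Suc q < length \<rho> \<and> 1 \<le> i \<and> i \<le> n \<and> \<rho> ! q = Wxbar i \<longrightarrow>
      \<not> hs_sat (KI n j) [Wx i] (psi n F k))"
proof -
  have labels: "hs_sat (KI n j) \<rho> (HProp Ps) \<and> hs_sat (KI n j) \<rho> (HNeg (HProp Pt)) \<longleftrightarrow>
    (\<forall>w\<in>set \<rho>. \<forall>i. w \<noteq> Sbar i) \<and> S0 \<in> set \<rho>"
    by (auto simp: Ps_in_KI_mu Pt_in_KI_mu)
  have checks: "hs_sat (KI n j) \<rho>
      (HBigAnd (map (\<lambda>i. HImp (HAnd (HProp (PX i)) (HNeg (HProp (PR i)))) (ptrans (F i))) [1..<n+1]))
    \<longleftrightarrow> (\<forall>i. 1 \<le> i \<and> i \<le> n \<and> Wxbar i \<notin> set \<rho> \<and> (\<exists>w\<in>set \<rho>. state_block w = i) \<longrightarrow>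
      peval (track_val \<rho>) (F i))"
    by (auto simp: hs_sat_HBigAnd hs_sat_HImp hs_sat_ptrans_F[OF wf] PX_in_KI_mu PR_in_KI_mu
        simp del: upt_Suc)
  have detour: "hs_sat (KI n j) \<rho>'
      (HImp (HBigOr (map (\<lambda>i. HA (HProp (PXbar i))) [1..<n+1]))
        (HA (HAnd (HNeg (HProp Ps)) (HAnd len2 (HA (HAnd len2 (HNeg (psi n F k))))))))
    \<longleftrightarrow> (\<forall>i. 1 \<le> i \<and> i \<le> n \<and> last \<rho>' = Wxbar i \<longrightarrow> \<not> hs_sat (KI n j) [Wx i] (psi n F k))"
    for \<rho>'
  proof -
    have "hs_sat (KI n j) \<rho>' (HA (HAnd (HNeg (HProp Ps)) (HAnd len2 (HA (HAnd len2 (HNeg (psi n F k)))))))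
      \<longleftrightarrow> \<not> hs_sat (KI n j) [Wx i] (psi n F k)" if "1 \<le> i" "i \<le> n" "last \<rho>' = Wxbar i" for i
      using hs_sat_detour_iff[OF that] hs_sat_psi_last[of "KI n j" "[Sbar i, Wx i]"] by simp
    then show ?thesis
      unfolding hs_sat_HImp hs_sat_some_PXbar by blast
  qed
  have "(\<forall>p. 1 \<le> p \<and> p < length \<rho> \<longrightarrow> P p) \<longleftrightarrow> (\<forall>q. Suc q < length \<rho> \<longrightarrow> P (Suc q))" for P
    by (auto dest: Suc_le_D)
  then have guard: "hs_sat (KI n j) \<rho>
      (HBoxB (HImp (HBigOr (map (\<lambda>i. HA (HProp (PXbar i))) [1..<n+1]))
        (HA (HAnd (HNeg (HProp Ps)) (HAnd len2 (HA (HAnd len2 (HNeg (psi n F k)))))))))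
    \<longleftrightarrow> (\<forall>q i. Suc q < length \<rho> \<and> 1 \<le> i \<and> i \<le> n \<and> \<rho> ! q = Wxbar i \<longrightarrow>
      \<not> hs_sat (KI n j) [Wx i] (psi n F k))"
    unfolding hs_sat_HBoxB detour by (auto simp: last_take_Suc)
  show ?thesis
    unfolding phi_body_def hs_sat.simps(3) using labels checks guard by blast
qed

lemma phi_track_from_Wxbar_refutes:
  assumes wf: "snsat_wf n j F" and r: "1 \<le> r" "r \<le> n"
    and track: "is_track (KI n j) \<rho>" and hd: "hd \<rho> = Wxbar r"
    and phi: "hs_sat (KI n j) \<rho> (phi_body n F (psi n F k))"
  shows "\<not> hs_sat (KI n j) [Wx r] (psi n F k)"
proof -
  note phi' = phi[unfolded hs_sat_phi_body_iff[OF wf]]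
  have sc: "successively (\<lambda>a b. (a, b) \<in> KI_delta n j) \<rho>" and "\<rho> \<noteq> []"
    using track by (simp_all add: is_track_iff_successively)
  then have h0: "\<rho> ! 0 = Wxbar r" using hd by (simp add: hd_conv_nth)
  moreover have "Suc 0 < length \<rho>"
    using KI_track_continues_until_S0[OF sc, of 0] phi' h0 \<open>\<rho> \<noteq> []\<close> by simp
  ultimately show ?thesis using phi' r by blast
qed

lemma phi_track_from_Wx_val:
  assumes wf: "snsat_wf n j F" and r: "1 \<le> r" "r \<le> n"
    and IH: "\<And>i. 1 \<le> i \<Longrightarrow> i < r \<Longrightarrow> snsat_val n F i \<longleftrightarrow> hs_sat (KI n j) [Wx i] (psi n F k)"
    and track: "is_track (KI n j) \<rho>" and hd: "hd \<rho> = Wx r"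
    and phi: "hs_sat (KI n j) \<rho> (phi_body n F (psi n F k))"
  shows "snsat_val n F r"
proof -
  let ?v = "snsat_val n F"
  note phi' = phi[unfolded hs_sat_phi_body_iff[OF wf]]
  have sc: "successively (\<lambda>a b. (a, b) \<in> KI_delta n j) \<rho>" and "\<rho> \<noteq> []"
    using track by (simp_all add: is_track_iff_successively)
  then have h0: "\<rho> ! 0 = Wx r" using hd by (simp add: hd_conv_nth)
  have no_Sbar: "\<forall>w\<in>set \<rho>. \<forall>i. w \<noteq> Sbar i" and S0: "S0 \<in> set \<rho>"
    using phi' by blast+
  have checked: "peval (track_val \<rho>) (F i)" if "1 \<le> i" "i \<le> r" "Wxbar i \<notin> set \<rho>" for i
    using phi' KI_track_visits_blocks[OF sc S0, of i] that h0 r by auto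
  have marked_false: "\<not> ?v i" if i: "1 \<le> i" "i < r" "Wxbar i \<in> set \<rho>" for i
  proof -
    obtain q where q: "q < length \<rho>" "\<rho> ! q = Wxbar i"
      using i(3) by (auto simp: in_set_conv_nth)
    then have "Suc q < length \<rho>" using KI_track_continues_until_S0[OF sc S0] by simp
    with phi' q i r have "\<not> hs_sat (KI n j) [Wx i] (psi n F k)" by auto
    with IH[of i] i show ?thesis by simp
  qed
  have unmarked_true: "?v i" if "1 \<le> i" "i \<le> r" "Wxbar i \<notin> set \<rho>" for i
    using that
  proof (induction i rule: less_induct)
    case (less i)
    have "(Wxbar m \<notin> set \<rho>) = ?v m" if "1 \<le> m" "m < i" for m
      using less.IH[of m] marked_false[of m] that less.prems by auto
    moreover have "sat_with (F i) (\<lambda>m. Wxbar m \<notin> set \<rho>)"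
      using checked[OF less.prems] by (rule sat_with_track_val)
    ultimately show ?case
      using snsat_val_iff_sat_with[OF wf, of i "\<lambda>m. Wxbar m \<notin> set \<rho>"] less.prems r by simp
  qed
  show ?thesis
    using unmarked_true[of r] KI_track_from_Wx_avoids_Wxbar[OF sc no_Sbar h0] r by simp
qed

section \<open>Tracks realising a guessed valuation\<close>

definition chosen_state :: "(nat \<Rightarrow> bool) \<Rightarrow> (nat \<Rightarrow> nat \<Rightarrow> bool) \<Rightarrow> nat \<Rightarrow> nat \<Rightarrow> state" where
  "chosen_state cx cz m u =
     (if u = 0 then if cx m then Wx m else Wxbar m else if cz m u then Wz m u else Wzbar m u)"

primrec descent :: "(nat \<Rightarrow> nat) \<Rightarrow> (nat \<Rightarrow> bool) \<Rightarrow> (nat \<Rightarrow> nat \<Rightarrow> bool) \<Rightarrow> nat \<Rightarrow> state list" where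
  "descent j cx cz 0 = [S0]"
| "descent j cx cz (Suc i) =
     map (chosen_state cx cz (Suc i)) [0..<Suc (j (Suc i))] @ descent j cx cz i"

lemma set_descent:
  "set (descent j cx cz i) = insert S0 {chosen_state cx cz m u |m u. 1 \<le> m \<and> m \<le> i \<and> u \<le> j m}"
proof (induction i)
  case (Suc i)
  have "set (map (chosen_state cx cz (Suc i)) [0..<Suc (j (Suc i))]) =
    {chosen_state cx cz (Suc i) u |u. u \<le> j (Suc i)}"
    by (auto simp: less_Suc_eq_le simp del: upt_Suc)
  with Suc show ?case by (auto simp: le_Suc_eq simp del: upt_Suc)
qed simp

lemma hd_descent: "hd (descent j cx cz (Suc i)) = chosen_state cx cz (Suc i) 0"
  by (simp add: upt_conv_Cons del: upt_Suc)

lemma Wxbar_eq_chosen_state: "Wxbar m = chosen_state cx cz m' u \<longleftrightarrow> m' = m \<and> u = 0 \<and> \<not> cx m"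
  by (auto simp: chosen_state_def)

lemma Wzbar_eq_chosen_state:
  "1 \<le> u \<Longrightarrow> Wzbar m u = chosen_state cx cz m' u' \<longleftrightarrow> m' = m \<and> u' = u \<and> \<not> cz m u"
  by (auto simp: chosen_state_def)

lemma Wxbar_in_descent: "Wxbar m \<in> set (descent j cx cz i) \<longleftrightarrow> 1 \<le> m \<and> m \<le> i \<and> \<not> cx m"
  unfolding set_descent by (auto simp: Wxbar_eq_chosen_state)

lemma Wzbar_in_descent:
  "1 \<le> u \<Longrightarrow> u \<le> j m \<Longrightarrow> Wzbar m u \<in> set (descent j cx cz i) \<longleftrightarrow> 1 \<le> m \<and> m \<le> i \<and> \<not> cz m u"
  unfolding set_descent by (auto simp: Wzbar_eq_chosen_state)

lemma state_block_in_descent: "w \<in> set (descent j cx cz i) \<Longrightarrow> state_block w \<le> i"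
  unfolding set_descent by (auto simp: chosen_state_def)

lemma Sbar_notin_descent: "Sbar m \<notin> set (descent j cx cz i)"
  unfolding set_descent by (auto simp: chosen_state_def)

lemma chosen_state_in_layer: "chosen_state cx cz m u \<in> layer m u"
  by (simp add: chosen_state_def layer_def)

lemma is_track_descent: "i \<le> n \<Longrightarrow> is_track (KI n j) (descent j cx cz i)"
proof (induction i)
  case 0
  then show ?case by (simp add: is_track_def KI_W_def)
next
  case (Suc i)
  let ?block = "map (chosen_state cx cz (Suc i)) [0..<Suc (j (Suc i))]"
  have "successively (\<lambda>a b. (a, b) \<in> KI_delta n j) ?block"
    unfolding successively_map
  proof (rule successively_upt)
    fix u assume "Suc u < Suc (j (Suc i))"
    with Suc.prems show "(chosen_state cx cz (Suc i) u, chosen_state cx cz (Suc i) (Suc u)) \<in> KI_delta n j"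
      by (intro KI_delta_within_block[of "Suc i" n u]) (simp_all add: chosen_state_in_layer)
  qed
  moreover have "(last ?block, hd (descent j cx cz i)) \<in> KI_delta n j"
  proof (cases i)
    case 0
    with \<open>Suc i \<le> n\<close> show ?thesis by (simp add: KI_delta_to_S0 chosen_state_in_layer)
  next
    case (Suc i')
    then have "hd (descent j cx cz i) = chosen_state cx cz i 0" by (simp only: hd_descent)
    with \<open>Suc i \<le> n\<close> \<open>i = Suc i'\<close> show ?thesis
      by (intro KI_delta_next_block[of "Suc i" n]) (simp_all add: chosen_state_in_layer)
  qed
  moreover have "set ?block \<subseteq> KI_W n j"
    using Suc.prems by (auto simp: chosen_state_def KI_W_def simp del: upt_Suc)
  moreover have "descent j cx cz i \<noteq> []" by (cases i) simp_all
  ultimately show ?case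
    using Suc by (simp add: is_track_iff_successively successively_append_iff del: upt_Suc)
qed

lemma hs_sat_psi_Suc_by_descent:
  assumes wf: "snsat_wf n j F" and r: "1 \<le> r" "r \<le> n"
    and below: "\<And>m. 1 \<le> m \<Longrightarrow> m < r \<Longrightarrow> cx m = snsat_val n F m"
    and top: "cx r \<Longrightarrow> snsat_val n F r"
    and refuted: "\<And>m. 1 \<le> m \<Longrightarrow> m \<le> r \<Longrightarrow> \<not> cx m \<Longrightarrow> \<not> hs_sat (KI n j) [Wx m] (psi n F k)"
  shows "hs_sat (KI n j) [if cx r then Wx r else Wxbar r] (psi n F (Suc k))"
proof -
  let ?v = "snsat_val n F"
  obtain \<zeta> where \<zeta>: "\<And>i. 1 \<le> i \<Longrightarrow> i \<le> n \<Longrightarrow> ?v i \<Longrightarrow>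
    peval (\<lambda>v. case v of X m \<Rightarrow> ?v m | Z a b \<Rightarrow> \<zeta> a b) (F i)"
    using snsat_Z_witness[OF wf] by blast
  let ?\<sigma> = "\<lambda>v. case v of X m \<Rightarrow> ?v m | Z a b \<Rightarrow> \<zeta> a b"
  define \<rho> where "\<rho> = descent j cx \<zeta> r"
  obtain r' where r': "r = Suc r'" using r(1) by (cases r) auto
  have hd: "hd \<rho> = (if cx r then Wx r else Wxbar r)"
    unfolding \<rho>_def r' hd_descent by (simp add: chosen_state_def)
  have checked: "\<forall>i. 1 \<le> i \<and> i \<le> n \<and> Wxbar i \<notin> set \<rho> \<and> (\<exists>w\<in>set \<rho>. state_block w = i) \<longrightarrow>
    peval (track_val \<rho>) (F i)"
  proof (intro allI impI, elim conjE)
    fix i assume i: "1 \<le> i" "i \<le> n"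
      and unmarked: "Wxbar i \<notin> set \<rho>" and visited: "\<exists>w\<in>set \<rho>. state_block w = i"
    have "i \<le> r" using visited state_block_in_descent unfolding \<rho>_def by blast
    moreover have "cx i" using unmarked i(1) \<open>i \<le> r\<close> unfolding \<rho>_def Wxbar_in_descent by blast
    ultimately have "?v i" using below[of i] top i(1) by (cases "i = r") simp_all
    then have "peval ?\<sigma> (F i)" using \<zeta> i by blast
    moreover have "peval ?\<sigma> (F i) = peval (track_val \<rho>) (F i)"
    proof (rule peval_F_cong[OF wf i])
      fix m assume "1 \<le> m" "m < i"
      with \<open>i \<le> r\<close> below[of m] show "?\<sigma> (X m) = track_val \<rho> (X m)"
        by (simp add: track_val_def \<rho>_def Wxbar_in_descent)
    next
      fix u assume "1 \<le> u" "u \<le> j i"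
      with i(1) \<open>i \<le> r\<close> show "?\<sigma> (Z i u) = track_val \<rho> (Z i u)"
        by (simp add: track_val_def \<rho>_def Wzbar_in_descent)
    qed
    ultimately show "peval (track_val \<rho>) (F i)" by simp
  qed
  have guarded: "\<forall>q i. Suc q < length \<rho> \<and> 1 \<le> i \<and> i \<le> n \<and> \<rho> ! q = Wxbar i \<longrightarrow>
    \<not> hs_sat (KI n j) [Wx i] (psi n F k)"
  proof (intro allI impI, elim conjE)
    fix q i assume "Suc q < length \<rho>" "1 \<le> i" "i \<le> n" "\<rho> ! q = Wxbar i"
    then have "Wxbar i \<in> set \<rho>" by (metis Suc_lessD nth_mem)
    then have "1 \<le> i" "i \<le> r" "\<not> cx i" unfolding \<rho>_def Wxbar_in_descent by simp_all
    then show "\<not> hs_sat (KI n j) [Wx i] (psi n F k)" by (rule refuted)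
  qed
  have no_Sbar: "\<forall>w\<in>set \<rho>. \<forall>i. w \<noteq> Sbar i" unfolding \<rho>_def using Sbar_notin_descent by blast
  have S0: "S0 \<in> set \<rho>" unfolding \<rho>_def set_descent by blast
  have "hs_sat (KI n j) \<rho> (phi_body n F (psi n F k))"
    unfolding hs_sat_phi_body_iff[OF wf] by (intro conjI no_Sbar S0 checked guarded)
  moreover have "is_track (KI n j) \<rho>" unfolding \<rho>_def using r(2) by (rule is_track_descent)
  ultimately show ?thesis using hd by auto
qed

section \<open>Induction on k\<close>

lemma hs_sat_psi_Suc_Wx_iff:
  assumes wf: "snsat_wf n j F" and r: "1 \<le> r" "r \<le> n"
    and IH: "\<And>i. 1 \<le> i \<Longrightarrow> i < r \<Longrightarrow> snsat_val n F i \<longleftrightarrow> hs_sat (KI n j) [Wx i] (psi n F k)"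
  shows "hs_sat (KI n j) [Wx r] (psi n F (Suc k)) \<longleftrightarrow> snsat_val n F r"
proof
  assume "hs_sat (KI n j) [Wx r] (psi n F (Suc k))"
  then obtain \<rho> where "is_track (KI n j) \<rho>" "hd \<rho> = Wx r"
    "hs_sat (KI n j) \<rho> (phi_body n F (psi n F k))"
    by auto
  then show "snsat_val n F r" using phi_track_from_Wx_val[OF wf r] IH by blast
next
  assume vr: "snsat_val n F r"
  have refuted: "\<not> hs_sat (KI n j) [Wx m] (psi n F k)"
    if "1 \<le> m" "m \<le> r" "\<not> snsat_val n F m" for m
    using IH[of m] that vr by (cases "m = r") auto
  have "hs_sat (KI n j) [if snsat_val n F r then Wx r else Wxbar r] (psi n F (Suc k))"
    by (rule hs_sat_psi_Suc_by_descent[OF wf r _ _ refuted]) simp_all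
  with vr show "hs_sat (KI n j) [Wx r] (psi n F (Suc k))" by simp
qed

lemma hs_sat_psi_Suc_Wxbar_iff:
  assumes wf: "snsat_wf n j F" and r: "1 \<le> r" "r \<le> n"
    and IH: "\<And>i. 1 \<le> i \<Longrightarrow> i < r \<Longrightarrow> snsat_val n F i \<longleftrightarrow> hs_sat (KI n j) [Wx i] (psi n F k)"
  shows "hs_sat (KI n j) [Wxbar r] (psi n F (Suc k)) \<longleftrightarrow> \<not> hs_sat (KI n j) [Wx r] (psi n F k)"
proof
  assume "hs_sat (KI n j) [Wxbar r] (psi n F (Suc k))"
  then obtain \<rho> where "is_track (KI n j) \<rho>" "hd \<rho> = Wxbar r"
    "hs_sat (KI n j) \<rho> (phi_body n F (psi n F k))"
    by auto
  then show "\<not> hs_sat (KI n j) [Wx r] (psi n F k)" by (rule phi_track_from_Wxbar_refutes[OF wf r])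
next
  assume nr: "\<not> hs_sat (KI n j) [Wx r] (psi n F k)"
  have refuted: "\<not> hs_sat (KI n j) [Wx m] (psi n F k)"
    if "1 \<le> m" "m \<le> r" "\<not> ((snsat_val n F)(r := False)) m" for m
    using IH[of m] that nr by (cases "m = r") auto
  have "hs_sat (KI n j) [if ((snsat_val n F)(r := False)) r then Wx r else Wxbar r]
      (psi n F (Suc k))"
    by (rule hs_sat_psi_Suc_by_descent[OF wf r _ _ refuted]) simp_all
  then show "hs_sat (KI n j) [Wxbar r] (psi n F (Suc k))" by simp
qed

lemma hs_sat_psi_Wx_iff:
  assumes wf: "snsat_wf n j F" and "1 \<le> r" "r \<le> n" "r \<le> k"
  shows "snsat_val n F r \<longleftrightarrow> hs_sat (KI n j) [Wx r] (psi n F k)"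
  using assms(2-4)
proof (induction k arbitrary: r)
  case (Suc k)
  have "snsat_val n F i \<longleftrightarrow> hs_sat (KI n j) [Wx i] (psi n F k)" if "1 \<le> i" "i < r" for i
    using Suc.IH[of i] that Suc.prems by simp
  with hs_sat_psi_Suc_Wx_iff[OF wf Suc.prems(1,2)] show ?case by blast
qed simp

theorem mainTheorem5:
  fixes n :: nat and j :: "nat \<Rightarrow> nat" and F :: "nat \<Rightarrow> pform" and k r :: nat
  assumes "snsat_wf n j F"
    and "k \<le> n + 1"
    and "1 \<le> r" and "r \<le> n"
  shows "(r \<le> k \<longrightarrow> (snsat_val n F r \<longleftrightarrow> hs_sat (KI n j) [Wx r] (psi n F k)))
       \<and> (r + 1 \<le> k \<longrightarrow> (\<not> snsat_val n F r \<longleftrightarrow> hs_sat (KI n j) [Wxbar r] (psi n F k)))"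
proof (intro conjI impI)
  assume "r \<le> k"
  then show "snsat_val n F r \<longleftrightarrow> hs_sat (KI n j) [Wx r] (psi n F k)"
    by (rule hs_sat_psi_Wx_iff[OF assms(1,3,4)])
next
  assume "r + 1 \<le> k"
  then obtain k' where k: "k = Suc k'" "r \<le> k'" by (cases k) auto
  have "snsat_val n F i \<longleftrightarrow> hs_sat (KI n j) [Wx i] (psi n F k')" if "1 \<le> i" "i < r" for i
    using hs_sat_psi_Wx_iff[OF assms(1), of i k'] that k(2) assms(4) by simp
  with hs_sat_psi_Suc_Wxbar_iff[OF assms(1,3,4)] hs_sat_psi_Wx_iff[OF assms(1,3,4) k(2)]
  show "\<not> snsat_val n F r \<longleftrightarrow> hs_sat (KI n j) [Wxbar r] (psi n F k)"
    unfolding k(1) by blast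
qed

end
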